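(* Let $k>0$, $l\ge0$, $\epsilon_r>0$, and define the mass-spring energy $p:\mathbb{R}^3\to\mathbb{R}$, $p(d)=\frac k2\big(\sqrt{d^Td+\epsilon_r}-l\big)^2$. Then $p\ge0$, $p$ is twice differentiable with locally Lipschitz second derivatives, and $p$ is $L$-curvature bounded for a constant $L$ depending only on $k,l,\epsilon_r$ (in particular independent of any relaxation parameter $L_2$); hence taking the relaxation $\bar p=p$ gives $\bar p=p$ whenever $\bar p\le L_2$.
   Context: A function $\phi$ is $L$-curvature bounded if $\phi(x)+\frac L2\|x\|^2$ is convex and $\nabla\phi$ is $L$-Lipschitz. In applications $d$ is an edge vector depending linearly on the configuration. *)

theory Defs
  imports "HOL-Analysis.Analysis"
begin

definition mass_spring :: "real \<Rightarrow> real \<Rightarrow> real \<Rightarrow> real^3 \<Rightarrow> real" where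
  "mass_spring k l eps d = k / 2 * (sqrt (d \<bullet> d + eps) - l)\<^sup>2"

definition curvature_bounded :: "real \<Rightarrow> ('a::euclidean_space \<Rightarrow> real) \<Rightarrow> bool" where
  "curvature_bounded L phi \<longleftrightarrow>
     convex_on UNIV (\<lambda>x. phi x + L / 2 * (norm x)\<^sup>2) \<and>
     (\<exists>G. (\<forall>x. (phi has_derivative (\<lambda>h. G x \<bullet> h)) (at x)) \<and> L-lipschitz_on UNIV G)"

definition C2_loclip :: "('a::euclidean_space \<Rightarrow> real) \<Rightarrow> bool" where
  "C2_loclip phi \<longleftrightarrow>
     (\<exists>G H. (\<forall>x. (phi has_derivative (\<lambda>h. G x \<bullet> h)) (at x)) \<and>
            (\<forall>x. (G has_derivative blinfun_apply (H x)) (at x)) \<and>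
            (\<forall>x. \<exists>e>0. \<exists>C. C-lipschitz_on (ball x e) H))"

end

theory Submission
  imports Defs
begin

(* With s(d) = sqrt (d \<bullet> d + eps) \<ge> sqrt eps, the gradient of p is (k - k l / s) d and its
   Hessian is (k - k l / s) I + (k l / s^3) d d^T, whose operator norm is at most
   L = k + 2 k l / sqrt eps everywhere.  By the mean value inequality the gradient is therefore
   L-Lipschitz, and adding L/2 |d|^2 makes the derivative along every line monotone, hence the
   sum convex.  The Hessian is built from 1/s, which is (1/eps)-Lipschitz, by bilinear
   operations, so it is Lipschitz on bounded sets. *)

lemma lipschitz_on_inner_diff_ge:
  fixes G :: "'a::real_inner \<Rightarrow> 'a"
  assumes "L-lipschitz_on U G" "x \<in> U" "y \<in> U"
  shows "- (L * (norm (y - x))\<^sup>2) \<le> (G y - G x) \<bullet> (y - x)"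
proof -
  have "- ((G y - G x) \<bullet> (y - x)) \<le> norm (G y - G x) * norm (y - x)"
    by (metis Cauchy_Schwarz_ineq2 abs_le_iff)
  also have "\<dots> \<le> L * norm (y - x) * norm (y - x)"
    using lipschitz_on_normD[OF assms(1,3,2)] by (simp add: mult_right_mono)
  finally show ?thesis by (simp add: power2_eq_square mult.assoc)
qed

lemma convex_on_add_quadratic_if_lipschitz_gradient:
  fixes f :: "'a::real_inner \<Rightarrow> real"
  assumes der: "\<And>x. (f has_derivative (\<lambda>h. G x \<bullet> h)) (at x)"
    and lip: "L-lipschitz_on UNIV G"
  shows "convex_on UNIV (\<lambda>x. f x + L / 2 * (norm x)\<^sup>2)"
proof (rule convex_onI)
  fix t :: real and x y :: 'a assume t: "0 < t" "t < 1"
  define z where "z s = x + s *\<^sub>R (y - x)" for s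
  define g where "g s = f (z s) + L / 2 * (z s \<bullet> z s)" for s
  define g' where "g' s = G (z s) \<bullet> (y - x) + L * (z s \<bullet> (y - x))" for s
  have "(g has_real_derivative g' s) (at s)" for s
  proof -
    have "(z has_derivative (\<lambda>r. r *\<^sub>R (y - x))) (at s)"
      unfolding z_def by (auto intro!: derivative_eq_intros)
    from has_derivative_compose[OF this der] has_derivative_inner[OF this this]
    have "(g has_derivative (\<lambda>r. G (z s) \<bullet> (r *\<^sub>R (y - x))
        + L / 2 * (z s \<bullet> r *\<^sub>R (y - x) + r *\<^sub>R (y - x) \<bullet> z s))) (at s)"
      unfolding g_def o_def by (intro has_derivative_add has_derivative_mult_right)
    then show ?thesis unfolding has_field_derivative_def
      by (rule has_derivative_eq_rhs) (auto simp: g'_def algebra_simps inner_commute)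
  qed
  moreover have "g' s1 \<le> g' s2" if "s1 \<le> s2" for s1 s2
  proof -
    have dz: "z s2 - z s1 = (s2 - s1) *\<^sub>R (y - x)" by (simp add: z_def algebra_simps)
    have "(s2 - s1) * (g' s2 - g' s1)
        = (s2 - s1) * ((G (z s2) - G (z s1)) \<bullet> (y - x) + L * ((z s2 - z s1) \<bullet> (y - x)))"
      by (simp add: g'_def algebra_simps)
    also have "\<dots> = (G (z s2) - G (z s1)) \<bullet> (z s2 - z s1) + L * (norm (z s2 - z s1))\<^sup>2"
      unfolding dz norm_scaleR power_mult_distrib power2_abs power2_norm_eq_inner
      by (simp add: algebra_simps power2_eq_square)
    also have "\<dots> \<ge> 0"
      using lipschitz_on_inner_diff_ge[OF lip, of "z s1" "z s2"] by simp
    finally show ?thesis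
      using that by (cases "s1 = s2") (auto simp: zero_le_mult_iff)
  qed
  ultimately have "convex_on UNIV g"
    by (intro convex_on_realI[where f'=g']) auto
  from convex_onD[OF this, of t 0 1] t
  show "f ((1 - t) *\<^sub>R x + t *\<^sub>R y) + L / 2 * (norm ((1 - t) *\<^sub>R x + t *\<^sub>R y))\<^sup>2
       \<le> (1 - t) * (f x + L / 2 * (norm x)\<^sup>2) + t * (f y + L / 2 * (norm y)\<^sup>2)"
    by (simp add: g_def z_def power2_norm_eq_inner algebra_simps)
qed simp

lemma lipschitz_on_bounded_image:
  assumes "bounded U" "C-lipschitz_on U f"
  shows "bounded (f ` U)"
proof (cases "U = {}")
  case False
  then obtain a where "a \<in> U" by blast
  from \<open>bounded U\<close> obtain r where r: "\<And>x. x \<in> U \<Longrightarrow> dist a x \<le> r"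
    by (meson bounded_any_center)
  have "dist (f a) (f x) \<le> C * r" if "x \<in> U" for x
    using lipschitz_onD[OF assms(2) \<open>a \<in> U\<close> that] r[OF that] lipschitz_on_nonneg[OF assms(2)]
    by (meson mult_left_mono order_trans)
  then show ?thesis unfolding bounded_def by blast
qed simp

lemma (in bounded_bilinear) lipschitz_on_bounded:
  assumes "bounded U" and f: "C-lipschitz_on U f" and g: "D-lipschitz_on U g"
  shows "\<exists>L. L-lipschitz_on U (\<lambda>x. prod (f x) (g x))"
proof -
  obtain A B where A: "A > 0" "\<And>x. x \<in> U \<Longrightarrow> norm (f x) \<le> A"
    and B: "B > 0" "\<And>x. x \<in> U \<Longrightarrow> norm (g x) \<le> B"
    using lipschitz_on_bounded_image[OF \<open>bounded U\<close> f] lipschitz_on_bounded_image[OF \<open>bounded U\<close> g]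
    unfolding bounded_pos by blast
  obtain K where K: "\<And>a b. norm (prod a b) \<le> norm a * norm b * K" "K \<ge> 0"
    using nonneg_bounded by blast
  have "norm (prod (f x) (g x) - prod (f y) (g y)) \<le> (K * (C * B + A * D)) * dist x y"
    if "x \<in> U" "y \<in> U" for x y
  proof -
    have "prod (f x) (g x) - prod (f y) (g y) = prod (f x - f y) (g x) + prod (f y) (g x - g y)"
      by (simp add: diff_left diff_right)
    then have "norm (prod (f x) (g x) - prod (f y) (g y))
        \<le> norm (prod (f x - f y) (g x)) + norm (prod (f y) (g x - g y))"
      by (metis norm_triangle_ineq)
    also have "\<dots> \<le> norm (f x - f y) * norm (g x) * K + norm (f y) * norm (g x - g y) * K"
      by (intro add_mono K(1))
    also have "\<dots> \<le> C * dist x y * B * K + A * (D * dist x y) * K"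
      using that A B lipschitz_onD[OF f] lipschitz_onD[OF g]
        lipschitz_on_nonneg[OF f] lipschitz_on_nonneg[OF g] K(2)
      by (intro add_mono mult_right_mono mult_mono) (auto simp: dist_norm)
    finally show ?thesis by (simp add: algebra_simps)
  qed
  then show ?thesis
    using A B lipschitz_on_nonneg[OF f] lipschitz_on_nonneg[OF g] K(2)
    by (intro exI[of _ "K * (C * B + A * D)"] lipschitz_onI) (auto simp: dist_norm[of "prod _ _"])
qed

lemma lipschitz_on_bounded_power:
  fixes f :: "'a::metric_space \<Rightarrow> 'b::real_normed_algebra_1"
  assumes "bounded U" "C-lipschitz_on U f"
  shows "\<exists>L. L-lipschitz_on U (\<lambda>x. f x ^ n)"
proof (induction n)
  case 0
  show ?case using lipschitz_on_constant by auto
next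
  case (Suc n)
  then obtain L where "L-lipschitz_on U (\<lambda>x. f x ^ n)" ..
  from bounded_bilinear.lipschitz_on_bounded[OF bounded_bilinear_mult assms this] show ?case by simp
qed

definition reg_norm :: "real \<Rightarrow> 'a::real_inner \<Rightarrow> real" where
  "reg_norm e x = sqrt (x \<bullet> x + e)"

lemma reg_norm_eq_norm_Pair: "e \<ge> 0 \<Longrightarrow> reg_norm e x = norm (x, sqrt e)"
  by (simp add: reg_norm_def norm_Pair power2_norm_eq_inner)

lemma sqrt_le_reg_norm: "e \<ge> 0 \<Longrightarrow> sqrt e \<le> reg_norm e x"
  by (simp add: reg_norm_def)

lemma norm_le_reg_norm: "e \<ge> 0 \<Longrightarrow> norm x \<le> reg_norm e x"
  by (simp add: reg_norm_eq_norm_Pair norm_Pair real_le_rsqrt)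

lemma reg_norm_pos: "e > 0 \<Longrightarrow> 0 < reg_norm e x"
  by (simp add: reg_norm_def add_nonneg_pos)

lemma lipschitz_on_reg_norm:
  assumes "e \<ge> 0"
  shows "1-lipschitz_on U (reg_norm e :: 'a::real_inner \<Rightarrow> real)"
proof (rule lipschitz_onI)
  fix x y :: 'a
  have "\<bar>norm (x, sqrt e) - norm (y, sqrt e)\<bar> \<le> norm ((x, sqrt e) - (y, sqrt e))"
    by (rule norm_triangle_ineq3)
  then show "dist (reg_norm e x) (reg_norm e y) \<le> 1 * dist x y"
    using assms by (simp add: reg_norm_eq_norm_Pair dist_real_def dist_norm norm_Pair)
qed simp

lemma lipschitz_on_inverse_reg_norm:
  assumes "e > 0"
  shows "(1 / e)-lipschitz_on U (\<lambda>x::'a::real_inner. inverse (reg_norm e x))"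
proof (rule lipschitz_onI)
  fix x y :: 'a
  define a b where "a = reg_norm e x" and "b = reg_norm e y"
  have ab: "0 < a" "0 < b" "sqrt e \<le> a" "sqrt e \<le> b" "dist a b \<le> dist x y"
    using reg_norm_pos[OF assms] sqrt_le_reg_norm[of e] assms
      lipschitz_onD[OF lipschitz_on_reg_norm[of e UNIV]]
    unfolding a_def b_def by auto
  have "e = sqrt e * sqrt e" using assms by simp
  also have "\<dots> \<le> a * b"
    using assms ab by (intro mult_mono) auto
  finally have "e \<le> a * b" .
  have "inverse a - inverse b = (b - a) / (a * b)"
    using ab by (simp add: field_simps)
  then have "dist (inverse a) (inverse b) = dist a b / (a * b)"
    using ab by (simp add: dist_real_def abs_div abs_minus_commute abs_mult)
  also have "\<dots> \<le> dist x y / e"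
    using ab assms \<open>e \<le> a * b\<close> by (intro frac_le) auto
  finally show "dist (inverse (reg_norm e x)) (inverse (reg_norm e y)) \<le> 1 / e * dist x y"
    by (simp add: a_def b_def)
qed (use assms in simp)

definition spring_gradient :: "real \<Rightarrow> real \<Rightarrow> real \<Rightarrow> 'a::real_inner \<Rightarrow> 'a" where
  "spring_gradient k l e x = (k - k * l / reg_norm e x) *\<^sub>R x"

definition spring_hessian :: "real \<Rightarrow> real \<Rightarrow> real \<Rightarrow> 'a::real_inner \<Rightarrow> 'a \<Rightarrow>\<^sub>L 'a" where
  "spring_hessian k l e x = (k - k * l / reg_norm e x) *\<^sub>R id_blinfun
     + (k * l / reg_norm e x ^ 3) *\<^sub>R (blinfun_scaleR_left x o\<^sub>L blinfun_inner_left x)"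

lemma spring_hessian_apply:
  "spring_hessian k l e x h = (k - k * l / reg_norm e x) *\<^sub>R h + (k * l / reg_norm e x ^ 3 * (h \<bullet> x)) *\<^sub>R x"
  by (simp add: spring_hessian_def blinfun.add_left blinfun.scaleR_left)

lemma has_derivative_spring_energy:
  fixes x :: "'a::real_inner"
  assumes "e > 0"
  shows "((\<lambda>d. k / 2 * (reg_norm e d - l)\<^sup>2) has_derivative (\<lambda>h. spring_gradient k l e x \<bullet> h)) (at x)"
proof -
  have pos: "0 < x \<bullet> x + e" using assms by (simp add: add_nonneg_pos)
  show ?thesis
    unfolding spring_gradient_def reg_norm_def
    by (rule has_derivative_eq_rhs, (rule derivative_eq_intros refl pos)+)
      (use pos in \<open>auto simp: field_simps inner_commute power2_eq_square\<close>)
qed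

lemma has_derivative_spring_gradient:
  fixes x :: "'a::real_inner"
  assumes "e > 0"
  shows "(spring_gradient k l e has_derivative spring_hessian k l e x) (at x)"
proof -
  have pos: "0 < x \<bullet> x + e" using assms by (simp add: add_nonneg_pos)
  then have cube: "sqrt (x \<bullet> x + e) ^ 3 = (x \<bullet> x + e) * sqrt (x \<bullet> x + e)"
    by (simp add: power3_eq_cube)
  show ?thesis
    unfolding spring_gradient_def[abs_def] spring_hessian_apply reg_norm_def
    by (rule has_derivative_eq_rhs, (rule derivative_eq_intros refl pos)+)
      (use pos cube in \<open>auto simp: fun_eq_iff scaleR_diff_left field_simps inner_commute\<close>)
qed

lemma norm_spring_hessian_le:
  assumes "k \<ge> 0" "l \<ge> 0" "e > 0"
  shows "norm (spring_hessian k l e x) \<le> k + 2 * k * l / sqrt e"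
proof (rule norm_blinfun_bound)
  fix h
  define s where "s = reg_norm e x"
  have s: "0 < s" "sqrt e \<le> s" "norm x \<le> s"
    using reg_norm_pos[OF assms(3)] sqrt_le_reg_norm[of e] norm_le_reg_norm[of e x] assms(3)
    unfolding s_def by auto
  have "\<bar>h \<bullet> x\<bar> \<le> norm h * s"
    using Cauchy_Schwarz_ineq2[of h x] s(3) by (meson mult_left_mono norm_ge_zero order_trans)
  then have "\<bar>h \<bullet> x\<bar> * norm x \<le> norm h * s * s"
    using s by (intro mult_mono) auto
  then have "k * l / s ^ 3 * (\<bar>h \<bullet> x\<bar> * norm x) \<le> k * l / s ^ 3 * (norm h * s * s)"
    using s assms by (intro mult_left_mono) auto
  also have "\<dots> = k * l / s * norm h"
    using s by (simp add: power3_eq_cube)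
  finally have rank_one_part: "k * l / s ^ 3 * (\<bar>h \<bullet> x\<bar> * norm x) \<le> k * l / s * norm h" .
  have identity_part: "\<bar>k - k * l / s\<bar> \<le> k + k * l / s"
    using s assms by (simp add: abs_le_iff)
  have "norm (spring_hessian k l e x h) \<le> \<bar>k - k * l / s\<bar> * norm h + k * l / s ^ 3 * (\<bar>h \<bullet> x\<bar> * norm x)"
    unfolding spring_hessian_apply s_def[symmetric]
    using norm_triangle_ineq[of "(k - k * l / s) *\<^sub>R h" "(k * l / s ^ 3 * (h \<bullet> x)) *\<^sub>R x"] assms s
    by (simp add: abs_mult mult.assoc)
  also have "\<dots> \<le> (k + k * l / s) * norm h + k * l / s * norm h"
    using identity_part rank_one_part by (intro add_mono mult_right_mono) auto
  also have "\<dots> = (k + 2 * k * l / s) * norm h"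
    by (simp add: algebra_simps)
  also have "\<dots> \<le> (k + 2 * k * l / sqrt e) * norm h"
    using s assms by (intro mult_right_mono add_left_mono divide_left_mono) auto
  finally show "norm (spring_hessian k l e x h) \<le> (k + 2 * k * l / sqrt e) * norm h" .
qed (use assms in simp)

lemma lipschitz_on_spring_gradient:
  assumes "k \<ge> 0" "l \<ge> 0" "e > 0"
  shows "(k + 2 * k * l / sqrt e)-lipschitz_on UNIV (spring_gradient k l e :: 'a::real_inner \<Rightarrow> 'a)"
  using has_derivative_spring_gradient[OF assms(3)] norm_spring_hessian_le[OF assms] assms
  by (intro bounded_derivative_imp_lipschitz) (auto simp: norm_blinfun.rep_eq[symmetric])

lemma spring_hessian_lipschitz_on_bounded:
  fixes U :: "'a::real_inner set"
  assumes "e > 0" "bounded U"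
  shows "\<exists>L. L-lipschitz_on U (spring_hessian k l e)"
proof -
  let ?u = "\<lambda>x::'a. inverse (reg_norm e x)"
  let ?rank_one = "\<lambda>x::'a. blinfun_scaleR_left x o\<^sub>L blinfun_inner_left x"
  note scaleR_lipschitz = bounded_bilinear.lipschitz_on_bounded[OF bounded_bilinear_scaleR assms(2)]
  have u: "(1 / e)-lipschitz_on U ?u"
    by (rule lipschitz_on_inverse_reg_norm[OF assms(1)])
  obtain A where A: "A-lipschitz_on U (\<lambda>x. (k - k * l * ?u x) *\<^sub>R (id_blinfun :: 'a \<Rightarrow>\<^sub>L 'a))"
    using scaleR_lipschitz[OF lipschitz_on_diff[OF lipschitz_on_constant lipschitz_on_cmult_real[OF u]]
        lipschitz_on_constant] by blast
  obtain C where "C-lipschitz_on U (\<lambda>x. ?u x ^ 3)"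
    using lipschitz_on_bounded_power[OF assms(2) u] by blast
  moreover obtain D where "D-lipschitz_on U ?rank_one"
  proof -
    obtain S where "S-lipschitz_on U (blinfun_scaleR_left :: 'a \<Rightarrow> _)"
      using bounded_linear.lipschitz_boundE[OF bounded_linear_blinfun_scaleR_left] .
    moreover obtain I where "I-lipschitz_on U (blinfun_inner_left :: 'a \<Rightarrow> _)"
      using bounded_linear.lipschitz_boundE[OF bounded_linear_blinfun_inner_left] .
    ultimately show ?thesis
      using bounded_bilinear.lipschitz_on_bounded[OF bounded_bilinear_blinfun_compose assms(2)] that
      by blast
  qed
  ultimately obtain E where E: "E-lipschitz_on U (\<lambda>x. (k * l * ?u x ^ 3) *\<^sub>R ?rank_one x)"
    using scaleR_lipschitz[OF lipschitz_on_cmult_real] by blast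
  have "spring_hessian k l e x = (k - k * l * ?u x) *\<^sub>R id_blinfun + (k * l * ?u x ^ 3) *\<^sub>R ?rank_one x" for x
    by (simp add: spring_hessian_def divide_inverse power_inverse)
  with lipschitz_on_add[OF A E] show ?thesis
    by auto
qed

theorem corollary5:
  fixes k l eps :: real
  assumes "k > 0" and "l \<ge> 0" and "eps > 0"
  shows "(\<forall>d. mass_spring k l eps d \<ge> 0) \<and>
         C2_loclip (mass_spring k l eps) \<and>
         (\<exists>L. curvature_bounded L (mass_spring k l eps))"
proof -
  have energy: "mass_spring k l eps = (\<lambda>d. k / 2 * (reg_norm eps d - l)\<^sup>2)"
    by (simp add: fun_eq_iff mass_spring_def reg_norm_def)
  have gradient: "(mass_spring k l eps has_derivative (\<lambda>h. spring_gradient k l eps x \<bullet> h)) (at x)" for x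
    unfolding energy by (rule has_derivative_spring_energy[OF assms(3)])
  have lipschitz: "(k + 2 * k * l / sqrt eps)-lipschitz_on UNIV (spring_gradient k l eps :: real^3 \<Rightarrow> _)"
    using assms by (intro lipschitz_on_spring_gradient) auto
  have "C2_loclip (mass_spring k l eps)"
    unfolding C2_loclip_def
    using gradient has_derivative_spring_gradient[OF assms(3)]
      spring_hessian_lipschitz_on_bounded[OF assms(3) bounded_ball]
    by (intro exI[of _ "spring_gradient k l eps"] exI[of _ "spring_hessian k l eps"]) (blast intro: zero_less_one)
  moreover have "curvature_bounded (k + 2 * k * l / sqrt eps) (mass_spring k l eps)"
    unfolding curvature_bounded_def
    using convex_on_add_quadratic_if_lipschitz_gradient[OF gradient lipschitz] gradient lipschitz by blast
  ultimately show ?thesis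
    using assms by (auto simp: mass_spring_def)
qed

end
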